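(* Fix an integer $j\ge 0$. Define a function $\mathrm{suc}$ from triples of integers to finite sets of triples recursively by $\mathrm{suc}(x,y,0)=\emptyset$ and, for $z\geq 1$, \[\mathrm{suc}(x,y,z)=\{(2,y{+}1,z),(3,y{+}1,z),\ldots,(x{+}1,y{+}1,z)\}\cup\{(x,x{+}1,z),(x,x{+}2,z),\ldots,(x,y,z)\}\cup \mathrm{suc}(x,x,z{-}1)\] (the second set being empty if $y\le x$). Let $T$ be the rooted labeled tree whose root has label $(j{+}1,j{+}1,j{+}1)$ and in which a vertex with label $L$ has exactly one child with label $L'$ for each $L'\in \mathrm{suc}(L)$. Then $T$ is isomorphic as a rooted tree to $BT^j(2143)$.
   Context: $B_n$ is the group of permutations $w$ of $\{-n,\ldots,-1,1,\ldots,n\}$ with $w(-i)=-w(i)$; such $w$ is determined by $[w(-n),w(-n+1),\ldots,w(-1)]$. $w$ avoids $2143$ if there are no indices $-n\le a<b<c<d\le n$ (nonzero) with $w(b)<w(a)<w(d)<w(c)$. $B_n^j(2143)$ is the set of $2143$-avoiding $w\in B_n$ with $w(i)>0$ for exactly $j$ indices $i\in\{1,\ldots,n\}$. For $\ell\ge1$ let $\beta_\ell(x)=x$ if $|x|<\ell$, $\beta_\ell(x)=x-1$ if $x<-\ell$, $\beta_\ell(x)=x+1$ if $x>\ell$. For $w\in B_n$, $1\le i\le n+1$ and $1\le \ell\le n+1$, let $w^{-i}_\ell\in B_{n+1}$ be defined by $w^{-i}_\ell(-k)=\beta_\ell(w(-k+1))$ for $i+1\le k\le n+1$, $w^{-i}_\ell(-i)=\ell$,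 $w^{-i}_\ell(-k)=\beta_\ell(w(-k))$ for $1\le k\le i-1$, extended to positive indices by $w^{-i}_\ell(k)=-w^{-i}_\ell(-k)$. The tree $BT^j(2143)$ is the rooted tree whose vertices are signed permutations, with root the identity of $B_j$ (i.e. $[-j,\ldots,-1]$), and in which the children of a vertex $w\in B_n^j(2143)$ are all $w^{-i}_\ell$ with $1\le i\le n+1$ and $m<\ell\le n+1$ that avoid $2143$, where $m=\max(\{w(-k):1\le k\le n\}\cup\{0\})$. *)

theory Defs
  imports Main
begin

text \<open>A vertex is identified with the sequence of labels on
the path from the root to it (siblings carry distinct labels, so this is faithful).\<close>

inductive_set tree_vertices :: "'a \<Rightarrow> ('a \<Rightarrow> 'a set) \<Rightarrow> 'a list set"
  for r :: 'a and C :: "'a \<Rightarrow> 'a set" where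
  root: "[r] \<in> tree_vertices r C"
| child: "p \<in> tree_vertices r C \<Longrightarrow> v \<in> C (last p) \<Longrightarrow> p @ [v] \<in> tree_vertices r C"

definition is_child_of :: "'a list \<Rightarrow> 'a list \<Rightarrow> bool" where
  "is_child_of q p \<longleftrightarrow> (\<exists>v. q = p @ [v])"

definition rooted_tree_iso :: "'a \<Rightarrow> ('a \<Rightarrow> 'a set) \<Rightarrow> 'b \<Rightarrow> ('b \<Rightarrow> 'b set) \<Rightarrow> bool" where
  "rooted_tree_iso r1 C1 r2 C2 \<longleftrightarrow>
     (\<exists>f. bij_betw f (tree_vertices r1 C1) (tree_vertices r2 C2) \<and> f [r1] = [r2] \<and>
        (\<forall>p\<in>tree_vertices r1 C1. \<forall>q\<in>tree_vertices r1 C1.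
            is_child_of q p \<longleftrightarrow> is_child_of (f q) (f p)))"

primrec sucN :: "int \<Rightarrow> int \<Rightarrow> nat \<Rightarrow> (int \<times> int \<times> int) set" where
  "sucN x y 0 = {}"
| "sucN x y (Suc n) =
     {(a, y + 1, int (Suc n)) | a. 2 \<le> a \<and> a \<le> x + 1}
   \<union> {(x, b, int (Suc n)) | b. x + 1 \<le> b \<and> b \<le> y}
   \<union> sucN x x n"

definition suc_label :: "int \<times> int \<times> int \<Rightarrow> (int \<times> int \<times> int) set" where
  "suc_label L = (case L of (x, y, z) \<Rightarrow> if z \<ge> 0 then sucN x y (nat z) else {})"

text \<open>A signed permutation w in B_n is represented by the list
[w(-n), w(-n+1), ..., w(-1)] of length n.\<close>

text \<open>Full one-line notation [w(-n),...,w(-1),w(1),...,w(n)], using w(i) = -w(-i).\<close>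

definition full_word :: "int list \<Rightarrow> int list" where
  "full_word ws = ws @ rev (map uminus ws)"

definition avoids_2143 :: "int list \<Rightarrow> bool" where
  "avoids_2143 ws \<longleftrightarrow>
     (let F = full_word ws in
      \<not> (\<exists>a b c d. a < b \<and> b < c \<and> c < d \<and> d < length F \<and>
                 F ! b < F ! a \<and> F ! a < F ! d \<and> F ! d < F ! c))"

definition beta :: "int \<Rightarrow> int \<Rightarrow> int" where
  "beta l x = (if \<bar>x\<bar> < l then x else if x \<le> -l then x - 1 else x + 1)"

text \<open>w^{-i}_l for w in B_n, 1 <= i <= n+1: listed as entries at -(n+1), ..., -1.
The entry at -k is beta(w(-k+1)) for k >= i+1, l for k = i, beta(w(-k)) for k <= i-1,
where w(-k) = ws ! (n - k).\<close>

definition insert_at :: "int list \<Rightarrow> nat \<Rightarrow> int \<Rightarrow> int list" where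
  "insert_at ws i l =
     (let n = length ws in
      map (\<lambda>k. if i + 1 \<le> k then beta l (ws ! (n - (k - 1)))
               else if k = i then l
               else beta l (ws ! (n - k)))
          (rev [1..<n + 2]))"

definition bt_children :: "int list \<Rightarrow> int list set" where
  "bt_children ws =
     (let n = length ws; m = Max (insert 0 (set ws)) in
      {insert_at ws i l | i l. 1 \<le> i \<and> i \<le> n + 1 \<and> m < l \<and> l \<le> int n + 1
                              \<and> avoids_2143 (insert_at ws i l)})"

definition bt_root :: "nat \<Rightarrow> int list" where
  "bt_root j = [- int j .. -1]"

end

theory Submission
  imports Defs
begin

text \<open>Label a 2143-avoiding signed permutation, listed as \<open>ws = [w(-n), \<dots>, w(-1)]\<close>, by
\<open>(k + 1, y, n + 1 - m)\<close>, where \<open>m\<close> is its largest positive entry (\<open>0\<close> if there is none), \<open>k\<close> is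
the length of the longest increasing prefix of \<open>ws\<close>, and \<open>y\<close> is the number of slots \<open>q \<le> n\<close>
at which inserting \<open>m + 1\<close> creates no 2143.  Along \<open>BT\<^sup>j(2143)\<close> the entries below \<open>-m\<close>
stay increasing.  Under this invariant a 2143 created by inserting \<open>l\<close> at slot \<open>p\<close> must use \<open>l\<close>
as its \<open>4\<close> and a descent to the left of \<open>p\<close> as its \<open>21\<close>, so the insertion is allowed iff
either \<open>l = m + 1\<close> and the slot is free, or \<open>l > m + 1\<close> and \<open>p \<le> k\<close>.  Tracking \<open>k\<close> and \<open>y\<close>
through these insertions shows that the labels of the children of a vertex are exactly the
successors of its label, each attained once; since the root \<open>[-j, \<dots>, -1]\<close> has label
\<open>(j + 1, j + 1, j + 1)\<close>, the labelling is an isomorphism onto \<open>T\<close>.\<close>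

section \<open>Isomorphism of trees generated by a labelling\<close>

lemma tree_vertices_nonempty: "p \<in> tree_vertices r C \<Longrightarrow> p \<noteq> [] \<and> hd p = r"
  by (induction rule: tree_vertices.induct) auto

lemma tree_vertices_snocD:
  assumes "q @ [v] \<in> tree_vertices r C" "q \<noteq> []"
  shows "q \<in> tree_vertices r C \<and> v \<in> C (last q)"
  using assms(1)
proof (cases rule: tree_vertices.cases)
  case root
  then show ?thesis using assms(2) by simp
next
  case (child p v')
  then show ?thesis by simp
qed

lemma tree_vertices_snoc_cases:
  assumes "q \<in> tree_vertices r C" "length q = Suc (length p)" "p \<noteq> []"
  obtains q0 v where "q = q0 @ [v]" "q0 \<in> tree_vertices r C" "v \<in> C (last q0)" "length q0 = length p"
proof -
  obtain q0 v where q: "q = q0 @ [v]" "length q0 = length p"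
    using assms(2) unfolding length_Suc_conv_rev by blast
  then have "q0 \<noteq> []" using assms(3) by auto
  then show ?thesis using that q tree_vertices_snocD[of q0 v r C] assms(1) by blast
qed

locale tree_labelling =
  fixes r1 :: 'a and C1 :: "'a \<Rightarrow> 'a set" and r2 :: 'b and C2 :: "'b \<Rightarrow> 'b set"
    and lab :: "'b \<Rightarrow> 'a" and I :: "'b \<Rightarrow> bool"
  assumes I_root: "I r2" and lab_root: "lab r2 = r1"
    and I_child: "\<And>w c. I w \<Longrightarrow> c \<in> C2 w \<Longrightarrow> I c"
    and inj_on_lab_children: "\<And>w. I w \<Longrightarrow> inj_on lab (C2 w)"
    and lab_children: "\<And>w. I w \<Longrightarrow> lab ` C2 w = C1 (lab w)"
begin

abbreviation V1 where "V1 \<equiv> tree_vertices r1 C1"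
abbreviation V2 where "V2 \<equiv> tree_vertices r2 C2"

lemma I_last: "p \<in> V2 \<Longrightarrow> I (last p)"
  by (induction rule: tree_vertices.induct) (auto intro: I_root I_child)

lemma map_lab_mem: "p \<in> V2 \<Longrightarrow> map lab p \<in> V1"
proof (induction rule: tree_vertices.induct)
  case root
  show ?case using lab_root tree_vertices.root by simp
next
  case (child p v)
  have "p \<noteq> []" using tree_vertices_nonempty[OF child.hyps(1)] by simp
  then have "last (map lab p) = lab (last p)" by (simp add: last_map)
  moreover have "lab v \<in> C1 (lab (last p))"
    using lab_children[OF I_last[OF child.hyps(1)]] child.hyps(2) by blast
  ultimately show ?case using tree_vertices.child[OF child.IH] by simp
qed

lemma map_lab_inj: "p \<in> V2 \<Longrightarrow> q \<in> V2 \<Longrightarrow> map lab p = map lab q \<Longrightarrow> p = q"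
proof (induction arbitrary: q rule: tree_vertices.induct)
  case root
  then obtain u where "q = [u]" by (cases q) auto
  then show ?case using tree_vertices_nonempty[of "[u]" r2 C2] root.prems(1) by simp
next
  case (child p v)
  have "length q = Suc (length p)" using arg_cong[OF child.prems(2), of length] by simp
  then obtain q0 u where q: "q = q0 @ [u]" "q0 \<in> V2" "u \<in> C2 (last q0)"
    using tree_vertices_snoc_cases[OF child.prems(1)] tree_vertices_nonempty[OF child.hyps(1)] by metis
  then have "map lab q0 = map lab p" "lab u = lab v" using child.prems(2) by auto
  then have "q0 = p" using child.IH[OF q(2)] by simp
  then have "u = v"
    using inj_onD[OF inj_on_lab_children[OF I_last[OF child.hyps(1)]] \<open>lab u = lab v\<close>] q(3) child.hyps(2)
    by simp
  then show ?case using q \<open>q0 = p\<close> by simp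
qed

lemma map_lab_onto: "p \<in> V1 \<Longrightarrow> p \<in> map lab ` V2"
proof (induction rule: tree_vertices.induct)
  case root
  show ?case using lab_root tree_vertices.root by force
next
  case (child p v)
  then obtain p2 where p2: "p2 \<in> V2" "p = map lab p2" by blast
  have "p2 \<noteq> []" using tree_vertices_nonempty[OF p2(1)] by simp
  then have "last p = lab (last p2)" using p2 by (simp add: last_map)
  then have "v \<in> lab ` C2 (last p2)" using lab_children[OF I_last[OF p2(1)]] child.hyps(2) by simp
  then obtain u where u: "u \<in> C2 (last p2)" "v = lab u" by blast
  then have "p @ [v] = map lab (p2 @ [u])" using p2 by simp
  then show ?case using tree_vertices.child[OF p2(1) u(1)] by blast
qed

lemma bij_betw_map_lab: "bij_betw (map lab) V2 V1"
  unfolding bij_betw_def inj_on_def using map_lab_inj map_lab_mem map_lab_onto by blast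

lemma is_child_of_map_lab:
  assumes "p \<in> V2" "q \<in> V2"
  shows "is_child_of (map lab q) (map lab p) \<longleftrightarrow> is_child_of q p"
proof
  assume "is_child_of (map lab q) (map lab p)"
  then obtain u where u: "map lab q = map lab p @ [u]" unfolding is_child_of_def by blast
  have "length q = Suc (length p)" using arg_cong[OF u, of length] by simp
  then obtain q0 v where q: "q = q0 @ [v]" "q0 \<in> V2"
    using tree_vertices_snoc_cases[OF assms(2)] tree_vertices_nonempty[OF assms(1)] by metis
  then have "q0 = p" using map_lab_inj[OF q(2) assms(1)] u by simp
  then show "is_child_of q p" unfolding is_child_of_def using q by blast
qed (auto simp: is_child_of_def)

theorem rooted_tree_iso: "rooted_tree_iso r1 C1 r2 C2"
proof -
  define f where "f = inv_into V2 (map lab)"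
  have f_bij: "bij_betw f V1 V2" unfolding f_def by (rule bij_betw_inv_into[OF bij_betw_map_lab])
  have lab_f: "map lab (f p) = p" if "p \<in> V1" for p
    unfolding f_def using that bij_betw_map_lab by (simp add: bij_betw_def f_inv_into_f)
  have "f [r1] = [r2]"
    using bij_betw_inv_into_left[OF bij_betw_map_lab tree_vertices.root] lab_root unfolding f_def by simp
  moreover have "is_child_of q p \<longleftrightarrow> is_child_of (f q) (f p)" if "p \<in> V1" "q \<in> V1" for p q
    using is_child_of_map_lab[OF bij_betw_apply[OF f_bij that(1)] bij_betw_apply[OF f_bij that(2)]]
      lab_f that by simp
  ultimately show ?thesis unfolding rooted_tree_iso_def using f_bij by blast
qed

end

section \<open>Patterns 2143 in signed permutations\<close>

text \<open>Entry \<open>t\<close> of \<^const>\<open>full_word\<close>: it is \<open>w(t - n)\<close> for \<open>t < n\<close> and \<open>w(t + 1 - n)\<close> for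
\<open>t \<ge> n\<close>.\<close>

definition full_nth :: "int list \<Rightarrow> nat \<Rightarrow> int" where
  "full_nth ws t = (if t < length ws then ws ! t else - (ws ! (2 * length ws - 1 - t)))"

definition pattern_2143 :: "int list \<Rightarrow> nat \<Rightarrow> nat \<Rightarrow> nat \<Rightarrow> nat \<Rightarrow> bool" where
  "pattern_2143 ws a b c d \<longleftrightarrow> a < b \<and> b < c \<and> c < d \<and> d < 2 * length ws \<and>
     full_nth ws b < full_nth ws a \<and> full_nth ws a < full_nth ws d \<and> full_nth ws d < full_nth ws c"

lemma nth_full_word: "t < 2 * length ws \<Longrightarrow> full_word ws ! t = full_nth ws t"
  unfolding full_word_def full_nth_def by (auto simp: nth_append rev_nth mult_2)

lemma avoids_2143_iff_no_pattern: "avoids_2143 ws \<longleftrightarrow> (\<nexists>a b c d. pattern_2143 ws a b c d)"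
proof -
  have "length (full_word ws) = 2 * length ws" by (simp add: full_word_def)
  then show ?thesis
    unfolding avoids_2143_def pattern_2143_def Let_def
    by (intro arg_cong[where f = Not] ex_cong1 conj_cong refl) (auto simp: nth_full_word)
qed

lemma full_nth_mirror: "t < 2 * length ws \<Longrightarrow> full_nth ws (2 * length ws - Suc t) = - full_nth ws t"
  unfolding full_nth_def by (auto simp: mult_2)

lemma pattern_2143_mirror:
  assumes "pattern_2143 ws a b c d"
  defines "N \<equiv> 2 * length ws - 1"
  shows "pattern_2143 ws (N - d) (N - c) (N - b) (N - a)"
  using assms unfolding pattern_2143_def N_def by (auto simp: full_nth_mirror)

lemma beta_less_iff: "0 < l \<Longrightarrow> beta l x < beta l y \<longleftrightarrow> x < y"
  unfolding beta_def by auto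

lemma beta_uminus: "0 < l \<Longrightarrow> beta l (- x) = - beta l x"
  unfolding beta_def by auto

lemma abs_beta: "0 < l \<Longrightarrow> \<bar>beta l x\<bar> = (if \<bar>x\<bar> < l then \<bar>x\<bar> else \<bar>x\<bar> + 1)"
  unfolding beta_def by auto

lemma beta_neg_iff: "0 < l \<Longrightarrow> beta l x < 0 \<longleftrightarrow> x < 0"
  unfolding beta_def by auto

text \<open>\<^const>\<open>insert_at\<close> indexed by the 0-based position \<open>p = n + 1 - i\<close> of the new entry in the
list \<open>[w(-n-1), \<dots>, w(-1)]\<close>.\<close>

definition insert_shift :: "nat \<Rightarrow> int \<Rightarrow> int list \<Rightarrow> int list" where
  "insert_shift p l ws = map (beta l) (take p ws) @ l # map (beta l) (drop p ws)"

lemma length_insert_shift [simp]: "p \<le> length ws \<Longrightarrow> length (insert_shift p l ws) = Suc (length ws)"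
  unfolding insert_shift_def by simp

lemma nth_insert_shift:
  "p \<le> length ws \<Longrightarrow> t \<le> length ws \<Longrightarrow> insert_shift p l ws ! t =
     (if t < p then beta l (ws ! t) else if t = p then l else beta l (ws ! (t - 1)))"
  unfolding insert_shift_def by (auto simp: nth_append min_def nth_Cons')

lemma insert_at_eq_insert_shift:
  assumes "1 \<le> i" "i \<le> length ws + 1"
  shows "insert_at ws i l = insert_shift (length ws + 1 - i) l ws"
proof (rule nth_equalityI)
  show "length (insert_at ws i l) = length (insert_shift (length ws + 1 - i) l ws)"
    using assms by (simp add: insert_at_def Let_def del: upt_Suc)
next
  fix t assume "t < length (insert_at ws i l)"
  then have t: "t \<le> length ws" by (simp add: insert_at_def Let_def del: upt_Suc)
  have "rev [1..<length ws + 2] ! t = length ws + 1 - t" using t by (simp add: rev_nth del: upt_Suc)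
  then show "insert_at ws i l ! t = insert_shift (length ws + 1 - i) l ws ! t"
    using assms t unfolding insert_at_def Let_def by (auto simp: nth_insert_shift simp del: upt_Suc)
qed

definition max_pos :: "int list \<Rightarrow> int" where
  "max_pos ws = Max (insert 0 (set ws))"

definition signed_perm :: "int list \<Rightarrow> bool" where
  "signed_perm ws \<longleftrightarrow> distinct (map abs ws) \<and> abs ` set ws = {1..int (length ws)}"

definition increasing_below :: "int list \<Rightarrow> int \<Rightarrow> bool" where
  "increasing_below ws M \<longleftrightarrow>
     (\<forall>a b. a < b \<longrightarrow> b < length ws \<longrightarrow> ws ! a < - M \<longrightarrow> ws ! b < - M \<longrightarrow> ws ! a < ws ! b)"

definition bt_invariant :: "int list \<Rightarrow> bool" where
  "bt_invariant ws \<longleftrightarrow> signed_perm ws \<and> avoids_2143 ws \<and> increasing_below ws (max_pos ws)"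

lemma nth_le_max_pos: "t < length ws \<Longrightarrow> ws ! t \<le> max_pos ws"
  unfolding max_pos_def by simp

lemma max_pos_nonneg: "0 \<le> max_pos ws"
  unfolding max_pos_def by simp

lemma signed_permI:
  assumes "distinct (map abs ws)" "\<forall>x\<in>set ws. 1 \<le> \<bar>x\<bar> \<and> \<bar>x\<bar> \<le> int (length ws)"
  shows "signed_perm ws"
proof -
  have sub: "abs ` set ws \<subseteq> {1..int (length ws)}" using assms(2) by auto
  have "card (abs ` set ws) = length ws"
    using assms(1) by (metis distinct_card length_map set_map)
  then show ?thesis unfolding signed_perm_def using assms(1)
    by (metis card_atLeastAtMost_int card_subset_eq finite_atLeastAtMost_int sub diff_add_cancel nat_int)
qed

lemma signed_perm_abs_nth:
  "signed_perm ws \<Longrightarrow> t < length ws \<Longrightarrow> 1 \<le> \<bar>ws ! t\<bar> \<and> \<bar>ws ! t\<bar> \<le> int (length ws)"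
  unfolding signed_perm_def by (metis atLeastAtMost_iff image_eqI nth_mem)

lemma signed_perm_nth_nonzero: "signed_perm ws \<Longrightarrow> t < length ws \<Longrightarrow> ws ! t \<noteq> 0"
  using signed_perm_abs_nth by fastforce

lemma signed_perm_abs_inj:
  "signed_perm ws \<Longrightarrow> s < length ws \<Longrightarrow> t < length ws \<Longrightarrow> \<bar>ws ! s\<bar> = \<bar>ws ! t\<bar> \<Longrightarrow> s = t"
  unfolding signed_perm_def by (metis distinct_conv_nth length_map nth_map)

lemma signed_perm_ex_nth:
  assumes "signed_perm ws" "1 \<le> v" "v \<le> int (length ws)"
  shows "\<exists>t<length ws. ws ! t = v \<or> ws ! t = - v"
proof -
  have "v \<in> abs ` set ws" using assms unfolding signed_perm_def by auto
  then obtain x where "x \<in> set ws" "\<bar>x\<bar> = v" by auto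
  then show ?thesis by (metis abs_if in_set_conv_nth minus_minus)
qed

lemma max_pos_le_length:
  assumes "signed_perm ws"
  shows "max_pos ws \<le> int (length ws)"
proof -
  have "max_pos ws \<in> insert 0 (set ws)" unfolding max_pos_def by (intro Max_in) auto
  then show ?thesis
    using signed_perm_abs_nth[OF assms] by (auto simp: in_set_conv_nth) (metis abs_ge_self order.trans)
qed

lemma full_nth_inj:
  assumes "signed_perm ws" "s < 2 * length ws" "t < 2 * length ws" "full_nth ws s = full_nth ws t"
  shows "s = t"
proof -
  let ?n = "length ws"
  have nz: "\<And>u. u < ?n \<Longrightarrow> ws ! u \<noteq> 0" using signed_perm_nth_nonzero[OF assms(1)] .
  have inj: "\<And>u v. u < ?n \<Longrightarrow> v < ?n \<Longrightarrow> \<bar>ws ! u\<bar> = \<bar>ws ! v\<bar> \<Longrightarrow> u = v"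
    using signed_perm_abs_inj[OF assms(1)] .
  consider "s < ?n" "t < ?n" | "s < ?n" "\<not> t < ?n" | "\<not> s < ?n" "t < ?n" | "\<not> s < ?n" "\<not> t < ?n"
    by blast
  then show ?thesis
  proof cases
    case 1
    then show ?thesis using assms(4) inj[of s t] unfolding full_nth_def by simp
  next
    case 2
    then have "ws ! s = - ws ! (2 * ?n - 1 - t)" using assms(4) unfolding full_nth_def by simp
    moreover from this have "s = 2 * ?n - 1 - t" using inj 2 assms(3) by simp
    ultimately show ?thesis using nz[of s] 2 by simp
  next
    case 3
    then have "ws ! t = - ws ! (2 * ?n - 1 - s)" using assms(4) unfolding full_nth_def by simp
    moreover from this have "t = 2 * ?n - 1 - s" using inj 3 assms(2) by simp
    ultimately show ?thesis using nz[of t] 3 by simp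
  next
    case 4
    then have "ws ! (2 * ?n - 1 - s) = ws ! (2 * ?n - 1 - t)" using assms(4) unfolding full_nth_def by simp
    then have "2 * ?n - 1 - s = 2 * ?n - 1 - t" using inj 4 assms(2,3) by simp
    then show ?thesis using 4 assms(2,3) by simp
  qed
qed

section \<open>Inserting a new largest positive value\<close>

locale insertion =
  fixes ws :: "int list" and p :: nat and l :: int
  assumes perm: "signed_perm ws" and below: "increasing_below ws (max_pos ws)"
    and max_less: "max_pos ws < l" and l_le: "l \<le> int (length ws) + 1" and p_le: "p \<le> length ws"
begin

abbreviation ws' where "ws' \<equiv> insert_shift p l ws"

lemma l_pos: "0 < l"
  using max_less max_pos_nonneg[of ws] by simp

lemma length_ws' [simp]: "length ws' = Suc (length ws)"
  using p_le by simp

lemma beta_pos_entry: "t < length ws \<Longrightarrow> 0 < ws ! t \<Longrightarrow> beta l (ws ! t) = ws ! t"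
  using nth_le_max_pos[of t ws] max_less unfolding beta_def by auto

lemma nth_ws'_p [simp]: "ws' ! p = l"
  using p_le by (simp add: nth_insert_shift)

definition old_pos :: "nat \<Rightarrow> nat" where
  "old_pos t = (if t < p then t else t - 1)"

definition new_pos :: "nat \<Rightarrow> nat" where
  "new_pos t = (if t < p then t else Suc t)"

lemma nth_ws'_old:
  "t \<le> length ws \<Longrightarrow> t \<noteq> p \<Longrightarrow> ws' ! t = beta l (ws ! old_pos t) \<and> old_pos t < length ws"
  using p_le unfolding old_pos_def by (auto simp: nth_insert_shift)

lemma nth_ws'_new:
  "t < length ws \<Longrightarrow> new_pos t \<le> length ws \<and> new_pos t \<noteq> p \<and> ws' ! new_pos t = beta l (ws ! t)"
  using p_le unfolding new_pos_def by (auto simp: nth_insert_shift)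

lemma old_pos_mono: "s < t \<Longrightarrow> s \<noteq> p \<Longrightarrow> t \<noteq> p \<Longrightarrow> old_pos s < old_pos t"
  unfolding old_pos_def by auto

lemma old_pos_less: "t < q \<Longrightarrow> t \<noteq> p \<Longrightarrow> p < q \<Longrightarrow> old_pos t < q - 1"
  unfolding old_pos_def by auto

lemma new_pos_less_iff: "new_pos s < new_pos t \<longleftrightarrow> s < t"
  unfolding new_pos_def by auto

lemma new_pos_less_high: "p < q \<Longrightarrow> new_pos t < q \<longleftrightarrow> t < q - 1"
  unfolding new_pos_def by auto

lemma nth_ws'_cases:
  assumes "t \<le> length ws" "t \<noteq> p"
  obtains "0 < ws' ! t" "ws' ! t = ws ! old_pos t"
  | "ws' ! t < 0" "ws' ! t = beta l (ws ! old_pos t)" "ws ! old_pos t < 0"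
proof -
  have t: "ws' ! t = beta l (ws ! old_pos t)" "old_pos t < length ws"
    using nth_ws'_old[OF assms] by auto
  show ?thesis
  proof (cases "0 < ws ! old_pos t")
    case True
    then show ?thesis using that(1) t beta_pos_entry by simp
  next
    case False
    then have "ws ! old_pos t < 0" using signed_perm_nth_nonzero[OF perm t(2)] by simp
    then show ?thesis using that(2) t beta_neg_iff[OF l_pos] by simp
  qed
qed

lemma nth_ws'_less_l: "t \<le> length ws \<Longrightarrow> t \<noteq> p \<Longrightarrow> ws' ! t < l"
  by (cases rule: nth_ws'_cases)
    (use l_pos nth_le_max_pos[of "old_pos t" ws] max_less nth_ws'_old in force)+

lemma nth_ws'_pos_le: "t \<le> length ws \<Longrightarrow> t \<noteq> p \<Longrightarrow> 0 < ws' ! t \<Longrightarrow> ws' ! t \<le> max_pos ws"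
  by (cases rule: nth_ws'_cases) (use nth_le_max_pos nth_ws'_old in auto)

lemma nth_ws'_pos_eq: "t \<le> length ws \<Longrightarrow> t \<noteq> p \<Longrightarrow> 0 < ws' ! t \<Longrightarrow> ws' ! t = ws ! old_pos t"
  by (cases rule: nth_ws'_cases) auto

lemma abs_nth_ws'_old:
  "t \<le> length ws \<Longrightarrow> t \<noteq> p \<Longrightarrow>
    \<bar>ws' ! t\<bar> = (if \<bar>ws ! old_pos t\<bar> < l then \<bar>ws ! old_pos t\<bar> else \<bar>ws ! old_pos t\<bar> + 1)"
  using nth_ws'_old abs_beta[OF l_pos] by simp

lemma distinct_abs_ws': "distinct (map abs ws')"
proof (subst distinct_conv_nth, intro allI impI)
  fix s t assume st: "s < length (map abs ws')" "t < length (map abs ws')" "s \<noteq> t"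
  then have st': "s \<le> length ws" "t \<le> length ws" by auto
  show "map abs ws' ! s \<noteq> map abs ws' ! t"
  proof
    assume "map abs ws' ! s = map abs ws' ! t"
    then have eq: "\<bar>ws' ! s\<bar> = \<bar>ws' ! t\<bar>" using st by simp
    consider "s = p" | "t = p" | "s \<noteq> p" "t \<noteq> p" by blast
    then show False
    proof cases
      case 1
      then show False using abs_nth_ws'_old[OF st'(2)] eq st(3) l_pos by (auto split: if_splits)
    next
      case 2
      then show False using abs_nth_ws'_old[OF st'(1)] eq st(3) l_pos by (auto split: if_splits)
    next
      case 3
      have "\<bar>ws ! old_pos s\<bar> = \<bar>ws ! old_pos t\<bar>"
        using abs_nth_ws'_old[OF st'(1) 3(1)] abs_nth_ws'_old[OF st'(2) 3(2)] eq by (auto split: if_splits)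
      then have "old_pos s = old_pos t"
        using signed_perm_abs_inj[OF perm] nth_ws'_old st' 3 by blast
      then show False using old_pos_mono[of s t] old_pos_mono[of t s] 3 st(3)
        by (metis less_irrefl_nat linorder_neqE_nat)
    qed
  qed
qed

lemma signed_perm_ws': "signed_perm ws'"
proof (rule signed_permI[OF distinct_abs_ws'], rule ballI)
  fix x assume "x \<in> set ws'"
  then obtain t where t: "t < length ws'" "ws' ! t = x" by (auto simp: in_set_conv_nth)
  show "1 \<le> \<bar>x\<bar> \<and> \<bar>x\<bar> \<le> int (length ws')"
  proof (cases "t = p")
    case True
    then show ?thesis using t l_pos l_le by auto
  next
    case False
    have "old_pos t < length ws" using nth_ws'_old t False by simp
    then show ?thesis using signed_perm_abs_nth[OF perm] abs_nth_ws'_old[of t] t False by fastforce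
  qed
qed

lemma max_pos_ws': "max_pos ws' = l"
  unfolding max_pos_def
proof (rule Max_eqI)
  show "l \<in> insert 0 (set ws')" using p_le by (simp add: insert_shift_def)
next
  fix x assume "x \<in> insert 0 (set ws')"
  then show "x \<le> l"
    using l_pos nth_ws'_less_l by (auto simp: in_set_conv_nth) (metis less_Suc_eq_le nth_ws'_p order.order_iff_strict)
qed simp

lemma increasing_below_ws': "increasing_below ws' l"
  unfolding increasing_below_def
proof (intro allI impI)
  fix a b assume ab: "a < b" "b < length ws'" "ws' ! a < - l" "ws' ! b < - l"
  then have np: "a \<noteq> p" "b \<noteq> p" using l_pos by auto
  have a: "ws' ! a = beta l (ws ! old_pos a)" "old_pos a < length ws" using nth_ws'_old np ab by auto
  have b: "ws' ! b = beta l (ws ! old_pos b)" "old_pos b < length ws" using nth_ws'_old np ab by auto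
  have "ws ! old_pos a < - max_pos ws" "ws ! old_pos b < - max_pos ws"
    using a(1) b(1) ab(3,4) max_less l_pos unfolding beta_def by (auto split: if_splits)
  then have "ws ! old_pos a < ws ! old_pos b"
    using below old_pos_mono ab np b(2) unfolding increasing_below_def by blast
  then show "ws' ! a < ws' ! b" using a b beta_less_iff l_pos by simp
qed


definition p_mirror :: nat where
  "p_mirror = 2 * length ws + 1 - p"

definition old_full_pos :: "nat \<Rightarrow> nat" where
  "old_full_pos t = (if t < p then t else if t < p_mirror then t - 1 else t - 2)"

lemma p_mirror_bounds: "length ws + 1 \<le> p_mirror" "p_mirror < 2 * length ws'"
  using p_le unfolding p_mirror_def by simp_all

lemma full_nth_ws'_left: "t \<le> length ws \<Longrightarrow> full_nth ws' t = ws' ! t"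
  unfolding full_nth_def by simp

lemma full_nth_ws'_p: "full_nth ws' p = l"
  using p_le unfolding full_nth_def by simp

lemma full_nth_ws'_p_mirror: "full_nth ws' p_mirror = - l"
proof -
  have "2 * Suc (length ws) - 1 - p_mirror = p" using p_le unfolding p_mirror_def by simp
  then show ?thesis using p_mirror_bounds unfolding full_nth_def by simp
qed

lemma full_nth_ws'_old:
  assumes "t < 2 * length ws'" "t \<noteq> p" "t \<noteq> p_mirror"
  shows "full_nth ws' t = beta l (full_nth ws (old_full_pos t)) \<and> old_full_pos t < 2 * length ws"
proof (cases "t \<le> length ws")
  case True
  have "old_full_pos t = old_pos t"
    using True p_mirror_bounds unfolding old_pos_def old_full_pos_def by auto
  then show ?thesis using nth_ws'_old[OF True assms(2)] True unfolding full_nth_def by simp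
next
  case False
  define u where "u = 2 * length ws + 1 - t"
  have u: "u \<le> length ws" "u \<noteq> p" using False assms unfolding u_def p_mirror_def by auto
  have "full_nth ws' t = - (ws' ! u)" using False unfolding full_nth_def u_def by simp
  also have "\<dots> = beta l (- (ws ! old_pos u))" using nth_ws'_old[OF u] beta_uminus l_pos by simp
  finally have f: "full_nth ws' t = beta l (- (ws ! old_pos u))" .
  show ?thesis
  proof (cases "t < p_mirror")
    case True
    then have "old_pos u = 2 * length ws - t" "old_full_pos t = t - 1"
      using False u unfolding old_pos_def old_full_pos_def u_def p_mirror_def by auto
    then show ?thesis using f True False assms unfolding full_nth_def p_mirror_def by auto
  next
    case False2: False
    then have "u < p" using False u assms unfolding u_def p_mirror_def by auto
    then have "old_pos u = u" "old_full_pos t = t - 2"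
      using False False2 p_le unfolding old_pos_def old_full_pos_def u_def by auto
    moreover have "p_mirror < t" using False2 assms(3) by simp
    then have "full_nth ws (t - 2) = - (ws ! u)" "t - 2 < 2 * length ws"
      using assms(1) p_mirror_bounds unfolding full_nth_def u_def by auto
    ultimately show ?thesis using f by simp
  qed
qed

lemma old_full_pos_mono:
  "s < t \<Longrightarrow> s \<notin> {p, p_mirror} \<Longrightarrow> t \<notin> {p, p_mirror} \<Longrightarrow> old_full_pos s < old_full_pos t"
  using p_le p_mirror_bounds unfolding old_full_pos_def by auto

lemma pattern_2143_old:
  assumes "pattern_2143 ws' a b c d" "{a, b, c, d} \<inter> {p, p_mirror} = {}"
  shows "pattern_2143 ws (old_full_pos a) (old_full_pos b) (old_full_pos c) (old_full_pos d)"
proof -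
  have "{a, b, c, d} \<subseteq> {..<2 * length ws'}" using assms(1) unfolding pattern_2143_def by auto
  then have "full_nth ws' t = beta l (full_nth ws (old_full_pos t)) \<and> old_full_pos t < 2 * length ws"
    if "t \<in> {a, b, c, d}" for t
    using full_nth_ws'_old assms(2) that by blast
  then show ?thesis using assms old_full_pos_mono[of a b] old_full_pos_mono[of b c] old_full_pos_mono[of c d]
    unfolding pattern_2143_def by (auto simp: beta_less_iff[OF l_pos])
qed

text \<open>In the full word of \<open>ws'\<close>, values above \<open>l\<close> occur only to the right of \<open>l\<close>, and in increasing
order (by \<^const>\<open>increasing_below\<close>); so \<open>l\<close> can only play the role of the \<open>4\<close>.\<close>

lemma pattern_2143_through_p:
  assumes "pattern_2143 ws' a b c d" "p \<in> {a, b, c, d}"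
  shows "c = p"
proof -
  have P: "a < b" "b < c" "c < d" "d < 2 * length ws'" "full_nth ws' b < full_nth ws' a"
    "full_nth ws' a < full_nth ws' d" "full_nth ws' d < full_nth ws' c"
    using assms(1) unfolding pattern_2143_def by auto
  have left: "full_nth ws' t < l" if "t < p" for t
    using that p_le full_nth_ws'_left nth_ws'_less_l by simp
  consider "a = p" | "b = p" | "c = p" | "d = p" using assms(2) by auto
  then show ?thesis
  proof cases
    case 1
    have "l < full_nth ws' d" using P 1 full_nth_ws'_p by simp
    have c: "length ws + 1 \<le> c"
    proof (rule ccontr)
      assume "\<not> length ws + 1 \<le> c"
      then show False using nth_ws'_less_l[of c] full_nth_ws'_left[of c] 1 P \<open>l < full_nth ws' d\<close> by auto
    qed
    define \<alpha> where "\<alpha> = 2 * length ws + 1 - d"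
    define \<beta> where "\<beta> = 2 * length ws + 1 - c"
    have "\<alpha> < \<beta>" "\<beta> < length ws'" using c P unfolding \<alpha>_def \<beta>_def by auto
    moreover have fc: "full_nth ws' c = - (ws' ! \<beta>)" using c unfolding full_nth_def \<beta>_def by simp
    moreover have fd: "full_nth ws' d = - (ws' ! \<alpha>)" using c P unfolding full_nth_def \<alpha>_def by simp
    ultimately have "ws' ! \<alpha> < ws' ! \<beta>"
      using increasing_below_ws' P \<open>l < full_nth ws' d\<close> unfolding increasing_below_def by force
    then show ?thesis using fc fd P by simp
  next
    case 2
    then show ?thesis using P left[of a] full_nth_ws'_p by simp
  next
    case 4
    then show ?thesis using P left[of c] full_nth_ws'_p by simp
  qed
qed

lemma avoids_2143_ws'_iff_no_pattern_at_p:
  assumes "avoids_2143 ws"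
  shows "avoids_2143 ws' \<longleftrightarrow> (\<nexists>a b d. pattern_2143 ws' a b p d)"
proof -
  have "\<exists>a b d. pattern_2143 ws' a b p d" if P: "pattern_2143 ws' a b c d" for a b c d
  proof (cases "{a, b, c, d} \<inter> {p, p_mirror} = {}")
    case True
    then show ?thesis using pattern_2143_old[OF P] assms avoids_2143_iff_no_pattern by blast
  next
    case False
    let ?N = "2 * length ws' - 1"
    have M: "pattern_2143 ws' (?N - d) (?N - c) (?N - b) (?N - a)" using pattern_2143_mirror[OF P] by simp
    have "?N - p_mirror = p" "?N - p = p_mirror" using p_le unfolding p_mirror_def by simp_all
    then have "p \<in> {a, b, c, d} \<or> p \<in> {?N - d, ?N - c, ?N - b, ?N - a}" using False by auto
    then show ?thesis using pattern_2143_through_p[OF P] pattern_2143_through_p[OF M] P M by metis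
  qed
  then show ?thesis using avoids_2143_iff_no_pattern by blast
qed

end

section \<open>Insertions avoiding 2143\<close>

definition increasing_prefix :: "int list \<Rightarrow> nat \<Rightarrow> bool" where
  "increasing_prefix ws q \<longleftrightarrow> (\<forall>a b. a < b \<longrightarrow> b < q \<longrightarrow> ws ! a < ws ! b)"

text \<open>Slot \<open>q\<close> is blocked if inserting \<open>max_pos ws + 1\<close> there creates a 2143 with the new entry as
the \<open>4\<close>: there is a descent before \<open>q\<close> whose top is negative (its negation then serves as the \<open>3\<close>),
or is exceeded by a positive value \<open>v \<le> max_pos ws\<close> that does not occur before \<open>q\<close> (so that \<open>v\<close>
occurs to the right of the slot in the full word).\<close>

definition blocked_slot :: "int list \<Rightarrow> nat \<Rightarrow> bool" where
  "blocked_slot ws q \<longleftrightarrow> (\<exists>a b. a < b \<and> b < q \<and> ws ! b < ws ! a \<and>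
      (ws ! a < 0 \<or> (\<exists>v. ws ! a < v \<and> v \<le> max_pos ws \<and> (\<forall>t<q. ws ! t \<noteq> v))))"

context insertion
begin

lemma full_nth_ws'_eq_beta: "t < p \<Longrightarrow> full_nth ws' t = beta l (ws ! t)"
  using full_nth_ws'_left[of t] p_le by (simp add: nth_insert_shift)

lemma exists_full_nth_right_of_p:
  assumes "1 \<le> v" "v < l" "\<forall>t<p. ws ! t \<noteq> v"
  shows "\<exists>d. p < d \<and> d < 2 * length ws' \<and> full_nth ws' d = v"
proof -
  have "v \<le> int (length ws)" using assms l_le by simp
  then obtain t where t: "t < length ws" "ws ! t = v \<or> ws ! t = - v"
    using signed_perm_ex_nth[OF perm] assms by blast
  have beta_t: "beta l (ws ! t) = ws ! t" using t assms unfolding beta_def by auto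
  show ?thesis
  proof (cases "ws ! t = v")
    case True
    then have "p \<le> t" using assms(3) by (metis not_le)
    then have "ws' ! Suc t = v" using t True beta_t p_le by (simp add: nth_insert_shift)
    then show ?thesis using \<open>p \<le> t\<close> t full_nth_ws'_left[of "Suc t"] by (intro exI[of _ "Suc t"]) simp
  next
    case False
    then have "full_nth ws' (new_pos t) = - v"
      using t nth_ws'_new[of t] full_nth_ws'_left beta_t by simp
    then have "full_nth ws' (2 * length ws' - Suc (new_pos t)) = v"
      using full_nth_mirror[of "new_pos t" ws'] nth_ws'_new[OF t(1)] by simp
    moreover have "p < 2 * length ws' - Suc (new_pos t)" using nth_ws'_new[OF t(1)] p_le by auto
    ultimately show ?thesis by (intro exI[of _ "2 * length ws' - Suc (new_pos t)"]) simp
  qed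
qed

lemma condition_of_pattern_at_p:
  assumes "pattern_2143 ws' a b p d"
  shows "if l = max_pos ws + 1 then blocked_slot ws p else \<not> increasing_prefix ws p"
proof -
  have P: "a < b" "b < p" "p < d" "d < 2 * length ws'" "full_nth ws' b < full_nth ws' a"
    "full_nth ws' a < full_nth ws' d" "full_nth ws' d < l"
    using assms full_nth_ws'_p unfolding pattern_2143_def by auto
  have ab: "a < length ws" "b < length ws" using P p_le by auto
  have fa: "full_nth ws' a = beta l (ws ! a)" using full_nth_ws'_eq_beta P by simp
  have desc: "ws ! b < ws ! a" using P fa full_nth_ws'_eq_beta[of b] beta_less_iff l_pos by simp
  show ?thesis
  proof (cases "l = max_pos ws + 1")
    case True
    have "ws ! a < 0 \<or> (\<exists>v. ws ! a < v \<and> v \<le> max_pos ws \<and> (\<forall>t<p. ws ! t \<noteq> v))"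
    proof (cases "ws ! a < 0")
      case False
      then have pos: "0 < ws ! a" using signed_perm_nth_nonzero[OF perm ab(1)] by simp
      then have a_eq: "full_nth ws' a = ws ! a" using fa beta_pos_entry ab by simp
      have "ws ! t \<noteq> full_nth ws' d" if "t < p" for t
      proof
        assume eq: "ws ! t = full_nth ws' d"
        then have "0 < ws ! t" using P pos a_eq by simp
        then have "full_nth ws' t = ws ! t"
          using full_nth_ws'_eq_beta[OF that] beta_pos_entry that p_le by simp
        then have "t = d" using full_nth_inj[OF signed_perm_ws', of t d] eq that P p_le by simp
        then show False using that P by simp
      qed
      moreover have "ws ! a < full_nth ws' d" "full_nth ws' d \<le> max_pos ws" using P True a_eq by auto
      ultimately show ?thesis by blast
    qed simp
    then show ?thesis using P(1,2) desc unfolding blocked_slot_def if_P[OF True] by blast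
  next
    case False
    then show ?thesis
      using P(1,2) desc unfolding increasing_prefix_def if_not_P[OF False] by (meson not_less_iff_gr_or_eq)
  qed
qed

lemma pattern_at_p_of_descent:
  assumes ab: "a < b" "b < p" "ws ! b < ws ! a"
    and top: "ws ! a < 0 \<or> (\<exists>v. ws ! a < v \<and> v < l \<and> (\<forall>t<p. ws ! t \<noteq> v))"
  shows "\<exists>d. pattern_2143 ws' a b p d"
proof -
  have a: "a < length ws" using ab p_le by simp
  have fa: "full_nth ws' a = beta l (ws ! a)" using full_nth_ws'_eq_beta ab by simp
  have fba: "full_nth ws' b < full_nth ws' a"
    using fa full_nth_ws'_eq_beta[of b] ab beta_less_iff l_pos by simp
  obtain d where d: "p < d" "d < 2 * length ws'" "full_nth ws' a < full_nth ws' d" "full_nth ws' d < l"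
  proof (cases "ws ! a < 0")
    case True
    show ?thesis
    proof (cases "\<bar>ws ! a\<bar> < l")
      case True
      then have "full_nth ws' a = ws ! a" using fa unfolding beta_def by simp
      moreover have "full_nth ws' (2 * length ws' - Suc a) = - full_nth ws' a"
        using full_nth_mirror[of a ws'] a by simp
      moreover have "p < 2 * length ws' - Suc a" using a p_le by simp
      ultimately show ?thesis using that True \<open>ws ! a < 0\<close> by auto
    next
      case False
      then have "full_nth ws' a = ws ! a - 1" "ws ! a \<le> - l"
        using fa \<open>ws ! a < 0\<close> unfolding beta_def by auto
      then show ?thesis
        using that[of p_mirror] full_nth_ws'_p_mirror l_pos p_mirror_bounds p_le by simp
    qed
  next
    case False
    then obtain v where v: "ws ! a < v" "v < l" "\<forall>t<p. ws ! t \<noteq> v" using top by blast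
    have "0 < ws ! a" using False signed_perm_nth_nonzero[OF perm a] by simp
    then have "full_nth ws' a = ws ! a" using fa beta_pos_entry a by simp
    then show ?thesis using exists_full_nth_right_of_p[of v] v \<open>0 < ws ! a\<close> that by force
  qed
  then show ?thesis using ab fba full_nth_ws'_p unfolding pattern_2143_def by auto
qed

lemma descent_of_condition:
  assumes "if l = max_pos ws + 1 then blocked_slot ws p else \<not> increasing_prefix ws p"
  obtains a b where "a < b" "b < p" "ws ! b < ws ! a"
    "ws ! a < 0 \<or> (\<exists>v. ws ! a < v \<and> v < l \<and> (\<forall>t<p. ws ! t \<noteq> v))"
proof (cases "l = max_pos ws + 1")
  case True
  then obtain a b where ab: "a < b" "b < p" "ws ! b < ws ! a"
    and top: "ws ! a < 0 \<or> (\<exists>v. ws ! a < v \<and> v \<le> max_pos ws \<and> (\<forall>t<p. ws ! t \<noteq> v))"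
    using assms unfolding blocked_slot_def if_P[OF True] by blast
  have "ws ! a < 0 \<or> (\<exists>v. ws ! a < v \<and> v < l \<and> (\<forall>t<p. ws ! t \<noteq> v))"
  proof (cases "ws ! a < 0")
    case False
    then obtain v where "ws ! a < v" "v \<le> max_pos ws" "\<forall>t<p. ws ! t \<noteq> v" using top by blast
    then show ?thesis using True by (intro disjI2 exI[of _ v]) simp
  qed simp
  then show ?thesis using that ab by blast
next
  case False
  then obtain a b where ab: "a < b" "b < p" "\<not> ws ! a < ws ! b"
    using assms unfolding increasing_prefix_def if_not_P[OF False] by blast
  then have "ws ! a \<noteq> ws ! b" using signed_perm_abs_inj[OF perm, of a b] p_le by auto
  then have "ws ! b < ws ! a" using ab by simp
  moreover have "\<forall>t<p. ws ! t \<noteq> l - 1"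
    using nth_le_max_pos[of _ ws] p_le max_less False by (metis add_diff_cancel_right' less_le_trans
        linorder_not_le order.not_eq_order_implies_strict zle_diff1_eq)
  moreover have "ws ! a < l - 1"
    using nth_le_max_pos[of a ws] ab p_le max_less False by simp
  moreover have "l - 1 < l" by simp
  ultimately show ?thesis using that[OF ab(1,2)] by blast
qed

lemma avoids_2143_ws'_iff:
  assumes "avoids_2143 ws"
  shows "avoids_2143 ws' \<longleftrightarrow> (if l = max_pos ws + 1 then \<not> blocked_slot ws p else increasing_prefix ws p)"
proof -
  have "(\<exists>a b d. pattern_2143 ws' a b p d) \<longleftrightarrow>
    (if l = max_pos ws + 1 then blocked_slot ws p else \<not> increasing_prefix ws p)"
  proof
    assume "\<exists>a b d. pattern_2143 ws' a b p d"
    then show "if l = max_pos ws + 1 then blocked_slot ws p else \<not> increasing_prefix ws p"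
      using condition_of_pattern_at_p by blast
  next
    assume "if l = max_pos ws + 1 then blocked_slot ws p else \<not> increasing_prefix ws p"
    then show "\<exists>a b d. pattern_2143 ws' a b p d"
      by (elim descent_of_condition) (use pattern_at_p_of_descent in blast)
  qed
  then show ?thesis using avoids_2143_ws'_iff_no_pattern_at_p[OF assms] by simp
qed

end

definition inc_prefix_len :: "int list \<Rightarrow> nat" where
  "inc_prefix_len ws = Max {q. q \<le> length ws \<and> increasing_prefix ws q}"

definition free_slots :: "int list \<Rightarrow> nat set" where
  "free_slots ws = {q. q \<le> length ws \<and> \<not> blocked_slot ws q}"

lemma Max_Collect_eq_threshold:
  assumes "\<forall>q\<le>N. P q \<longleftrightarrow> q \<le> R" "R \<le> (N::nat)"
  shows "Max {q. q \<le> N \<and> P q} = R"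
proof -
  have "{q. q \<le> N \<and> P q} = {..R}" using assms by auto
  then show ?thesis by (auto intro: Max_eqI)
qed

lemma increasing_prefix_iff_le_inc_prefix_len:
  assumes "q \<le> length ws"
  shows "increasing_prefix ws q \<longleftrightarrow> q \<le> inc_prefix_len ws"
proof -
  let ?S = "{q. q \<le> length ws \<and> increasing_prefix ws q}"
  have "inc_prefix_len ws \<in> ?S"
    unfolding inc_prefix_len_def by (rule Max_in) (auto simp: increasing_prefix_def)
  moreover have "increasing_prefix ws q \<Longrightarrow> q \<le> inc_prefix_len ws"
    unfolding inc_prefix_len_def using assms by (simp add: Max_ge)
  ultimately show ?thesis unfolding increasing_prefix_def by auto
qed

lemma inc_prefix_len_le_length: "inc_prefix_len ws \<le> length ws"
  using increasing_prefix_iff_le_inc_prefix_len[of 0 ws]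
  unfolding inc_prefix_len_def by (intro Max.boundedI) (auto simp: increasing_prefix_def)

lemma finite_free_slots: "finite (free_slots ws)"
  unfolding free_slots_def by simp

lemma free_slot_if_le_inc_prefix_len: "q \<le> inc_prefix_len ws \<Longrightarrow> q \<in> free_slots ws"
  using inc_prefix_len_le_length[of ws] increasing_prefix_iff_le_inc_prefix_len[of q ws]
  unfolding free_slots_def blocked_slot_def increasing_prefix_def by force

lemma card_free_slots_from:
  assumes "p \<le> inc_prefix_len ws"
  shows "card {q \<in> free_slots ws. p \<le> q} = card (free_slots ws) - p"
proof -
  have "free_slots ws = {..<p} \<union> {q \<in> free_slots ws. p \<le> q}"
    using free_slot_if_le_inc_prefix_len[of _ ws] assms by fastforce
  then have "card (free_slots ws) = p + card {q \<in> free_slots ws. p \<le> q}"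
    by (metis (no_types, lifting) card_Un_disjoint card_lessThan disjoint_iff finite_Un
        finite_free_slots lessThan_iff mem_Collect_eq not_le)
  then show ?thesis by simp
qed

context insertion
begin

lemma increasing_prefix_ws'_iff:
  assumes "q \<le> Suc (length ws)"
  shows "increasing_prefix ws' q \<longleftrightarrow>
    (if q \<le> p then increasing_prefix ws q else q = Suc p \<and> increasing_prefix ws p)"
proof -
  have ws'_less: "ws' ! a < ws' ! b \<longleftrightarrow> ws ! a < ws ! b" if "a < p" "b < p" for a b
    using that p_le by (simp add: nth_insert_shift beta_less_iff l_pos)
  consider "q \<le> p" | "q = Suc p" | "Suc p < q" by linarith
  then show ?thesis
  proof cases
    case 1
    then show ?thesis using ws'_less unfolding increasing_prefix_def by auto
  next
    case 2
    have "ws' ! a < ws' ! p" if "a < p" for a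
      using nth_ws'_less_l[of a] that p_le by simp
    then show ?thesis using 2 ws'_less unfolding increasing_prefix_def
      by (auto simp: less_Suc_eq)
  next
    case 3
    have "ws' ! Suc p < ws' ! p" using nth_ws'_less_l[of "Suc p"] 3 assms by simp
    then have "\<not> increasing_prefix ws' q" using 3 unfolding increasing_prefix_def
      by (meson lessI not_less_iff_gr_or_eq)
    then show ?thesis using 3 by simp
  qed
qed

lemma inc_prefix_len_ws':
  "inc_prefix_len ws' = (if p \<le> inc_prefix_len ws then Suc p else inc_prefix_len ws)"
  unfolding inc_prefix_len_def[of ws'] length_ws'
proof (rule Max_Collect_eq_threshold)
  have "p \<le> length ws" by (rule p_le)
  then show "\<forall>q\<le>Suc (length ws). increasing_prefix ws' q \<longleftrightarrow>
      q \<le> (if p \<le> inc_prefix_len ws then Suc p else inc_prefix_len ws)"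
    using increasing_prefix_ws'_iff increasing_prefix_iff_le_inc_prefix_len[of _ ws] by auto
  show "(if p \<le> inc_prefix_len ws then Suc p else inc_prefix_len ws) \<le> Suc (length ws)"
    using inc_prefix_len_le_length[of ws] p_le by auto
qed


lemma blocked_slot_ws'_iff:
  "blocked_slot ws' q \<longleftrightarrow> (\<exists>a b. a < b \<and> b < q \<and> ws' ! b < ws' ! a \<and>
      (ws' ! a < 0 \<or> (\<exists>v. ws' ! a < v \<and> v \<le> l \<and> (\<forall>t<q. ws' ! t \<noteq> v))))"
  unfolding blocked_slot_def max_pos_ws' ..

lemma blocked_slot_ws'_low:
  assumes "q \<le> p"
  shows "blocked_slot ws' q \<longleftrightarrow> \<not> increasing_prefix ws q"
proof
  assume "blocked_slot ws' q"
  then obtain a b where ab: "a < b" "b < q" "ws' ! b < ws' ! a" unfolding blocked_slot_def by blast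
  then have "ws ! b < ws ! a" using assms p_le by (simp add: nth_insert_shift beta_less_iff l_pos)
  then show "\<not> increasing_prefix ws q" using ab unfolding increasing_prefix_def by force
next
  assume "\<not> increasing_prefix ws q"
  then obtain a b where ab: "a < b" "b < q" "\<not> ws ! a < ws ! b" unfolding increasing_prefix_def by blast
  then have "ws ! a \<noteq> ws ! b" using signed_perm_abs_inj[OF perm, of a b] assms p_le by auto
  then have "ws ! b < ws ! a" using ab by simp
  then have "ws' ! b < ws' ! a" using ab assms p_le by (simp add: nth_insert_shift beta_less_iff l_pos)
  moreover have "ws' ! a < l" using nth_ws'_less_l[of a] ab assms p_le by simp
  moreover have "ws' ! t \<noteq> l" if "t < q" for t using nth_ws'_less_l[of t] that assms p_le by simp
  ultimately show "blocked_slot ws' q" unfolding blocked_slot_ws'_iff using ab by blast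
qed

lemma blocked_descent_avoids_p:
  assumes "a < b" "b < q" "ws' ! b < ws' ! a" "q \<le> Suc (length ws)"
    "ws' ! a < 0 \<or> (\<exists>v. ws' ! a < v \<and> v \<le> l \<and> (\<forall>t<q. ws' ! t \<noteq> v))"
  shows "a \<noteq> p" "b \<noteq> p"
proof -
  show "a \<noteq> p" using assms(5) l_pos by auto
  then show "b \<noteq> p" using nth_ws'_less_l[of a] assms by auto
qed

text \<open>For \<open>l > max_pos ws + 1\<close>, the value \<open>l - 1\<close> is missing from \<open>ws'\<close> and exceeds all its other
positive entries, so every descent to the left of a slot blocks it.\<close>

lemma blocked_slot_ws'_high_iff:
  assumes "p < q" "q \<le> Suc (length ws)" "l \<noteq> max_pos ws + 1"
  shows "blocked_slot ws' q \<longleftrightarrow> \<not> increasing_prefix ws (q - 1)"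
proof
  assume "blocked_slot ws' q"
  then obtain a b where ab: "a < b" "b < q" "ws' ! b < ws' ! a"
    "ws' ! a < 0 \<or> (\<exists>v. ws' ! a < v \<and> v \<le> l \<and> (\<forall>t<q. ws' ! t \<noteq> v))"
    unfolding blocked_slot_ws'_iff by blast
  note np = blocked_descent_avoids_p[OF ab(1-3) assms(2) ab(4)]
  have "old_pos a < old_pos b" "old_pos b < q - 1" using old_pos_mono old_pos_less ab np assms by auto
  moreover have "ws ! old_pos b < ws ! old_pos a"
    using ab nth_ws'_old[of a] nth_ws'_old[of b] np assms by (simp add: beta_less_iff l_pos)
  ultimately show "\<not> increasing_prefix ws (q - 1)" unfolding increasing_prefix_def by force
next
  assume "\<not> increasing_prefix ws (q - 1)"
  then obtain a b where ab: "a < b" "b < q - 1" "\<not> ws ! a < ws ! b" unfolding increasing_prefix_def by blast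
  have abn: "a < length ws" "b < length ws" using ab assms by auto
  then have "ws ! a \<noteq> ws ! b" using signed_perm_abs_inj[OF perm, of a b] ab by auto
  then have "ws ! b < ws ! a" using ab by simp
  note na = nth_ws'_new[OF abn(1)] and nb = nth_ws'_new[OF abn(2)]
  have lt: "new_pos a < new_pos b" "new_pos b < q" using new_pos_less_iff new_pos_less_high assms ab by auto
  have desc: "ws' ! new_pos b < ws' ! new_pos a" using na nb \<open>ws ! b < ws ! a\<close> by (simp add: beta_less_iff l_pos)
  have missing: "\<forall>t<q. ws' ! t \<noteq> l - 1"
  proof (intro allI impI)
    fix t assume "t < q"
    show "ws' ! t \<noteq> l - 1"
    proof (cases "t = p")
      case False
      then have "ws' ! t \<le> 0 \<or> ws' ! t \<le> max_pos ws" using nth_ws'_pos_le[of t] \<open>t < q\<close> assms by force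
      then show ?thesis using max_less assms max_pos_nonneg[of ws] by auto
    qed simp
  qed
  have "ws' ! new_pos a \<noteq> 0"
    using signed_perm_nth_nonzero[OF signed_perm_ws', of "new_pos a"] na by simp
  then have "ws' ! new_pos a < 0 \<or> ws' ! new_pos a < l - 1"
    using nth_ws'_pos_le[of "new_pos a"] na max_less assms(3) by fastforce
  then have "ws' ! new_pos a < 0 \<or> (\<exists>v. ws' ! new_pos a < v \<and> v \<le> l \<and> (\<forall>t<q. ws' ! t \<noteq> v))"
  proof (rule disj_forward)
    assume "ws' ! new_pos a < l - 1"
    then show "\<exists>v. ws' ! new_pos a < v \<and> v \<le> l \<and> (\<forall>t<q. ws' ! t \<noteq> v)"
      using missing by (intro exI[of _ "l - 1"]) simp
  qed
  then show "blocked_slot ws' q" unfolding blocked_slot_ws'_iff using lt desc by blast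
qed

lemma blocked_slot_of_blocked_slot_ws':
  assumes "p < q" "q \<le> Suc (length ws)" "l = max_pos ws + 1" "blocked_slot ws' q"
  shows "blocked_slot ws (q - 1)"
proof -
  obtain a b where ab: "a < b" "b < q" "ws' ! b < ws' ! a"
    and top: "ws' ! a < 0 \<or> (\<exists>v. ws' ! a < v \<and> v \<le> l \<and> (\<forall>t<q. ws' ! t \<noteq> v))"
    using assms(4) unfolding blocked_slot_ws'_iff by blast
  note np = blocked_descent_avoids_p[OF ab assms(2) top]
  have lt: "old_pos a < old_pos b" "old_pos b < q - 1" using old_pos_mono old_pos_less ab np assms by auto
  have a: "ws' ! a = beta l (ws ! old_pos a)" "old_pos a < length ws" using nth_ws'_old[of a] np ab assms by auto
  have "ws' ! b = beta l (ws ! old_pos b)" using nth_ws'_old[of b] np ab assms by auto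
  then have desc: "ws ! old_pos b < ws ! old_pos a" using ab a by (simp add: beta_less_iff l_pos)
  have "ws ! old_pos a < 0 \<or> (\<exists>v. ws ! old_pos a < v \<and> v \<le> max_pos ws \<and> (\<forall>t<q - 1. ws ! t \<noteq> v))"
  proof (cases "ws' ! a < 0")
    case True
    then show ?thesis using a beta_neg_iff[OF l_pos] by simp
  next
    case False
    then obtain v where v: "ws' ! a < v" "v \<le> l" "\<forall>t<q. ws' ! t \<noteq> v" using top by blast
    have "v \<noteq> l" using v(3) assms(1) nth_ws'_p by metis
    then have v_le: "v \<le> max_pos ws" using v assms by simp
    have "0 < ws' ! a" using False signed_perm_nth_nonzero[OF signed_perm_ws', of a] ab assms(2) by force
    then have a_eq: "ws' ! a = ws ! old_pos a" using nth_ws'_pos_eq np ab assms by simp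
    have "ws ! t \<noteq> v" if "t < q - 1" for t
    proof
      assume "ws ! t = v"
      moreover have "t < length ws" using that assms by simp
      ultimately have "ws' ! new_pos t = v"
        using nth_ws'_new v \<open>0 < ws' ! a\<close> v_le max_less unfolding beta_def by auto
      then show False using v(3) new_pos_less_high[of q t] that assms by auto
    qed
    then show ?thesis using v a_eq v_le by auto
  qed
  then show ?thesis unfolding blocked_slot_def using lt desc by blast
qed

lemma blocked_slot_ws'_of_blocked_slot:
  assumes "p < q" "q \<le> Suc (length ws)" "l = max_pos ws + 1" "blocked_slot ws (q - 1)"
  shows "blocked_slot ws' q"
proof -
  obtain a b where ab: "a < b" "b < q - 1" "ws ! b < ws ! a"
    and top: "ws ! a < 0 \<or> (\<exists>v. ws ! a < v \<and> v \<le> max_pos ws \<and> (\<forall>t<q - 1. ws ! t \<noteq> v))"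
    using assms(4) unfolding blocked_slot_def by blast
  have abn: "a < length ws" "b < length ws" using ab assms by auto
  note na = nth_ws'_new[OF abn(1)] and nb = nth_ws'_new[OF abn(2)]
  have lt: "new_pos a < new_pos b" "new_pos b < q" using new_pos_less_iff new_pos_less_high assms ab by auto
  have desc: "ws' ! new_pos b < ws' ! new_pos a" using na nb ab by (simp add: beta_less_iff l_pos)
  have "ws' ! new_pos a < 0 \<or> (\<exists>v. ws' ! new_pos a < v \<and> v \<le> l \<and> (\<forall>t<q. ws' ! t \<noteq> v))"
  proof (cases "ws ! a < 0")
    case True
    then show ?thesis using na beta_neg_iff[OF l_pos] by simp
  next
    case False
    then obtain v where v: "ws ! a < v" "v \<le> max_pos ws" "\<forall>t<q - 1. ws ! t \<noteq> v" using top by blast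
    have "0 < ws ! a" using False signed_perm_nth_nonzero[OF perm abn(1)] by simp
    then have a_eq: "ws' ! new_pos a = ws ! a" using na beta_pos_entry abn by simp
    have "ws' ! t \<noteq> v" if "t < q" for t
    proof (cases "t = p")
      case True
      then show ?thesis using v max_less by simp
    next
      case False
      show ?thesis
      proof
        assume "ws' ! t = v"
        then have "0 < ws' ! t" using v \<open>0 < ws ! a\<close> by simp
        then have "ws ! old_pos t = v" using nth_ws'_pos_eq[of t] \<open>ws' ! t = v\<close> False that assms by simp
        then show False using v(3) old_pos_less[OF that False assms(1)] by blast
      qed
    qed
    then show ?thesis using v a_eq max_less by (intro disjI2 exI[of _ v]) auto
  qed
  then show ?thesis unfolding blocked_slot_ws'_iff using lt desc by blast
qed


lemma free_slots_ws':
  assumes "l = max_pos ws + 1"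
  shows "free_slots ws' = {..min p (inc_prefix_len ws)} \<union> Suc ` {q \<in> free_slots ws. p \<le> q}"
proof (rule set_eqI)
  fix q
  show "q \<in> free_slots ws' \<longleftrightarrow> q \<in> {..min p (inc_prefix_len ws)} \<union> Suc ` {q \<in> free_slots ws. p \<le> q}"
  proof (cases "q \<le> p")
    case True
    then have "q \<in> free_slots ws' \<longleftrightarrow> increasing_prefix ws q"
      unfolding free_slots_def using blocked_slot_ws'_low p_le by simp
    also have "\<dots> \<longleftrightarrow> q \<le> inc_prefix_len ws"
      using increasing_prefix_iff_le_inc_prefix_len True p_le by simp
    finally show ?thesis using True by auto
  next
    case False
    define q' where "q' = q - 1"
    have q': "q = Suc q'" "p \<le> q'" using False unfolding q'_def by auto
    have "q \<in> free_slots ws' \<longleftrightarrow> q' \<in> free_slots ws"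
    proof (cases "q' \<le> length ws")
      case True
      then have "p < q" "q \<le> Suc (length ws)" using q' by auto
      then have "blocked_slot ws' q \<longleftrightarrow> blocked_slot ws q'"
        using blocked_slot_of_blocked_slot_ws'[OF _ _ assms] blocked_slot_ws'_of_blocked_slot[OF _ _ assms]
        unfolding q'_def by blast
      then show ?thesis using True q'(1) unfolding free_slots_def by simp
    next
      case False
      then show ?thesis using q'(1) unfolding free_slots_def by simp
    qed
    then show ?thesis using q' by (auto simp: image_iff)
  qed
qed

lemma card_free_slots_ws'_eq:
  assumes "l = max_pos ws + 1"
  shows "card (free_slots ws') = Suc (min p (inc_prefix_len ws)) + card {q \<in> free_slots ws. p \<le> q}"
proof -
  have "{..min p (inc_prefix_len ws)} \<inter> Suc ` {q \<in> free_slots ws. p \<le> q} = {}" by auto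
  then have "card (free_slots ws') =
      card {..min p (inc_prefix_len ws)} + card (Suc ` {q \<in> free_slots ws. p \<le> q})"
    unfolding free_slots_ws'[OF assms] by (intro card_Un_disjoint) (simp_all add: finite_free_slots)
  then show ?thesis by (simp add: card_image)
qed

lemma card_free_slots_ws'_low:
  assumes "l = max_pos ws + 1" "p \<le> inc_prefix_len ws"
  shows "card (free_slots ws') = Suc (card (free_slots ws))"
proof -
  have "{..p} \<subseteq> free_slots ws" using free_slot_if_le_inc_prefix_len assms(2) by auto
  then have "card {..p} \<le> card (free_slots ws)" by (rule card_mono[OF finite_free_slots])
  moreover have "card (free_slots ws') = Suc p + (card (free_slots ws) - p)"
    using card_free_slots_ws'_eq[OF assms(1)] card_free_slots_from[OF assms(2)] assms(2) by simp
  ultimately show ?thesis by simp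
qed

lemma free_slots_ws'_big:
  assumes "l \<noteq> max_pos ws + 1" "p \<le> inc_prefix_len ws"
  shows "free_slots ws' = {..Suc (inc_prefix_len ws)}"
proof -
  have "\<not> blocked_slot ws' q \<longleftrightarrow> q \<le> Suc (inc_prefix_len ws)" if "q \<le> Suc (length ws)" for q
  proof (cases "q \<le> p")
    case True
    then show ?thesis using blocked_slot_ws'_low increasing_prefix_iff_le_inc_prefix_len[of q ws] p_le assms
      by simp
  next
    case False
    then show ?thesis using blocked_slot_ws'_high_iff[OF _ that assms(1)] that
        increasing_prefix_iff_le_inc_prefix_len[of "q - 1" ws] inc_prefix_len_le_length[of ws] assms(2)
      by auto
  qed
  moreover have "q \<le> Suc (length ws)" if "q \<le> Suc (inc_prefix_len ws)" for q
    using that inc_prefix_len_le_length[of ws] by simp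
  ultimately show ?thesis unfolding free_slots_def length_ws' by blast
qed

end

section \<open>Labels of the vertices of \<open>BT\<^sup>j(2143)\<close>\<close>

definition bt_label :: "int list \<Rightarrow> int \<times> int \<times> int" where
  "bt_label ws = (int (inc_prefix_len ws) + 1, int (card (free_slots ws)), int (length ws) + 1 - max_pos ws)"

definition valid_insertions :: "int list \<Rightarrow> (nat \<times> int) set" where
  "valid_insertions ws = {(p, l). p \<le> length ws \<and> max_pos ws < l \<and> l \<le> int (length ws) + 1 \<and>
      (if l = max_pos ws + 1 then p \<in> free_slots ws else p \<le> inc_prefix_len ws)}"

definition child_label :: "int list \<Rightarrow> nat \<Rightarrow> int \<Rightarrow> int \<times> int \<times> int" where
  "child_label ws p l =
     (if p \<le> inc_prefix_len ws then int p + 2 else int (inc_prefix_len ws) + 1,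
      if l \<noteq> max_pos ws + 1 then int (inc_prefix_len ws) + 2
      else if p \<le> inc_prefix_len ws then int (card (free_slots ws)) + 1
      else int (inc_prefix_len ws) + 1 + int (card {q \<in> free_slots ws. p \<le> q}),
      int (length ws) + 2 - l)"

lemma insertion_if_bt_invariant:
  "bt_invariant ws \<Longrightarrow> p \<le> length ws \<Longrightarrow> max_pos ws < l \<Longrightarrow> l \<le> int (length ws) + 1 \<Longrightarrow>
    insertion ws p l"
  unfolding bt_invariant_def by unfold_locales auto

lemma avoids_2143_insert_shift_iff:
  assumes "bt_invariant ws" "p \<le> length ws" "max_pos ws < l" "l \<le> int (length ws) + 1"
  shows "avoids_2143 (insert_shift p l ws) \<longleftrightarrow>
    (if l = max_pos ws + 1 then p \<in> free_slots ws else p \<le> inc_prefix_len ws)"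
proof -
  interpret insertion ws p l by (rule insertion_if_bt_invariant[OF assms])
  show ?thesis using assms avoids_2143_ws'_iff increasing_prefix_iff_le_inc_prefix_len[of p ws]
    unfolding bt_invariant_def free_slots_def by simp
qed

lemma bt_children_eq:
  assumes "bt_invariant ws"
  shows "bt_children ws = (\<lambda>(p, l). insert_shift p l ws) ` valid_insertions ws"
proof -
  have "bt_children ws = {insert_shift p l ws | p l. p \<le> length ws \<and> max_pos ws < l \<and>
      l \<le> int (length ws) + 1 \<and> avoids_2143 (insert_shift p l ws)}"
    unfolding bt_children_def Let_def max_pos_def[symmetric]
  proof (intro Collect_cong iffI; elim exE conjE)
    fix c i l assume "c = insert_at ws i l" "1 \<le> i" "i \<le> length ws + 1" "max_pos ws < l"
      "l \<le> int (length ws) + 1" "avoids_2143 (insert_at ws i l)"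
    then show "\<exists>p l. c = insert_shift p l ws \<and> p \<le> length ws \<and> max_pos ws < l \<and>
        l \<le> int (length ws) + 1 \<and> avoids_2143 (insert_shift p l ws)"
      by (intro exI[of _ "length ws + 1 - i"] exI[of _ l]) (simp add: insert_at_eq_insert_shift)
  next
    fix c p l assume "c = insert_shift p l ws" "p \<le> length ws" "max_pos ws < l"
      "l \<le> int (length ws) + 1" "avoids_2143 (insert_shift p l ws)"
    then show "\<exists>i l. c = insert_at ws i l \<and> 1 \<le> i \<and> i \<le> length ws + 1 \<and> max_pos ws < l \<and>
        l \<le> int (length ws) + 1 \<and> avoids_2143 (insert_at ws i l)"
      by (intro exI[of _ "length ws + 1 - p"] exI[of _ l]) (simp add: insert_at_eq_insert_shift)
  qed
  also have "\<dots> = (\<lambda>(p, l). insert_shift p l ws) ` {(p, l). p \<le> length ws \<and> max_pos ws < l \<and>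
      l \<le> int (length ws) + 1 \<and> avoids_2143 (insert_shift p l ws)}"
    by (auto simp: image_iff)
  also have "{(p, l). p \<le> length ws \<and> max_pos ws < l \<and>
      l \<le> int (length ws) + 1 \<and> avoids_2143 (insert_shift p l ws)} = valid_insertions ws"
    using avoids_2143_insert_shift_iff[OF assms] unfolding valid_insertions_def by blast
  finally show ?thesis .
qed

lemma bt_invariant_insert_shift:
  assumes "bt_invariant ws" "(p, l) \<in> valid_insertions ws"
  shows "bt_invariant (insert_shift p l ws)"
proof -
  have pl: "p \<le> length ws" "max_pos ws < l" "l \<le> int (length ws) + 1"
    using assms(2) unfolding valid_insertions_def by auto
  interpret insertion ws p l by (rule insertion_if_bt_invariant[OF assms(1) pl])
  show ?thesis using avoids_2143_insert_shift_iff[OF assms(1) pl] assms(2)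
    signed_perm_ws' increasing_below_ws' max_pos_ws'
    unfolding bt_invariant_def valid_insertions_def by simp
qed

lemma bt_label_insert_shift:
  assumes "bt_invariant ws" "(p, l) \<in> valid_insertions ws"
  shows "bt_label (insert_shift p l ws) = child_label ws p l"
proof -
  have pl: "p \<le> length ws" "max_pos ws < l" "l \<le> int (length ws) + 1"
    and cond: "if l = max_pos ws + 1 then p \<in> free_slots ws else p \<le> inc_prefix_len ws"
    using assms(2) unfolding valid_insertions_def by auto
  interpret insertion ws p l by (rule insertion_if_bt_invariant[OF assms(1) pl])
  have "card (free_slots ws') =
    (if l \<noteq> max_pos ws + 1 then inc_prefix_len ws + 2
     else if p \<le> inc_prefix_len ws then card (free_slots ws) + 1
     else inc_prefix_len ws + 1 + card {q \<in> free_slots ws. p \<le> q})"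
    using cond free_slots_ws'_big card_free_slots_ws'_low card_free_slots_ws'_eq by auto
  then show ?thesis
    unfolding bt_label_def child_label_def inc_prefix_len_ws' max_pos_ws' by simp
qed

lemma bij_betw_card_tail:
  fixes S :: "nat set"
  assumes "finite S"
  shows "bij_betw (\<lambda>p. card {q \<in> S. p \<le> q}) S {1..card S}"
proof -
  let ?f = "\<lambda>p. card {q \<in> S. p \<le> q}"
  have strict: "?f b < ?f a" if "a \<in> S" "a < b" for a b
  proof -
    have "{q \<in> S. b \<le> q} \<subseteq> {q \<in> S. a \<le> q}" "a \<in> {q \<in> S. a \<le> q} - {q \<in> S. b \<le> q}"
      using that by auto
    then have "{q \<in> S. b \<le> q} \<subset> {q \<in> S. a \<le> q}" by blast
    then show ?thesis using assms by (intro psubset_card_mono) auto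
  qed
  have inj: "inj_on ?f S"
    by (rule inj_onI) (metis linorder_neqE_nat less_irrefl strict)
  have "?f ` S \<subseteq> {1..card S}"
  proof
    fix c assume "c \<in> ?f ` S"
    then obtain p where p: "p \<in> S" "c = ?f p" by blast
    then have "{q \<in> S. p \<le> q} \<noteq> {}" by auto
    then have "1 \<le> c" using p assms by (simp add: Suc_leI card_gt_0_iff)
    moreover have "c \<le> card S" using p assms by (auto intro: card_mono)
    ultimately show "c \<in> {1..card S}" by simp
  qed
  moreover have "card (?f ` S) = card {1..card S}" using card_image[OF inj] by simp
  ultimately have "?f ` S = {1..card S}" by (intro card_subset_eq) auto
  then show ?thesis unfolding bij_betw_def using inj by simp
qed

lemma card_free_slots_tail_bound:
  assumes "inc_prefix_len ws < p"
  shows "inc_prefix_len ws + 1 + card {q \<in> free_slots ws. p \<le> q} \<le> card (free_slots ws)"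
proof -
  have "{..inc_prefix_len ws} \<union> {q \<in> free_slots ws. p \<le> q} \<subseteq> free_slots ws"
    using free_slot_if_le_inc_prefix_len by auto
  moreover have "{..inc_prefix_len ws} \<inter> {q \<in> free_slots ws. p \<le> q} = {}" using assms by auto
  ultimately show ?thesis
    using card_mono[OF finite_free_slots] card_Un_disjoint[of "{..inc_prefix_len ws}"] finite_free_slots
    by (metis (no_types, lifting) card_atMost finite_atMost finite_subset sup.cobounded2 Suc_eq_plus1)
qed

lemma inj_on_child_label: "inj_on (\<lambda>(p, l). child_label ws p l) (valid_insertions ws)"
proof (rule inj_onI, clarify)
  fix p l p' l'
  assume pl: "(p, l) \<in> valid_insertions ws" "(p', l') \<in> valid_insertions ws"
    and eq: "child_label ws p l = child_label ws p' l'"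
  let ?K = "inc_prefix_len ws" and ?F = "free_slots ws"
  have "l' = l" using eq unfolding child_label_def by simp
  moreover have "p = p'"
  proof (cases "l = max_pos ws + 1")
    case False
    then show ?thesis using pl eq \<open>l' = l\<close> unfolding valid_insertions_def child_label_def by auto
  next
    case True
    then have F: "p \<in> ?F" "p' \<in> ?F" using pl \<open>l' = l\<close> unfolding valid_insertions_def by auto
    consider "p \<le> ?K" "p' \<le> ?K" | "p \<le> ?K \<longleftrightarrow> \<not> p' \<le> ?K" | "?K < p" "?K < p'" by linarith
    then show ?thesis
    proof cases
      case 1
      then show ?thesis using eq unfolding child_label_def by simp
    next
      case 2
      then show ?thesis using eq True \<open>l' = l\<close> card_free_slots_tail_bound[of ws p] card_free_slots_tail_bound[of ws p']
        unfolding child_label_def by (auto split: if_splits)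
    next
      case 3
      then have "card {q \<in> ?F. p \<le> q} = card {q \<in> ?F. p' \<le> q}"
        using eq True \<open>l' = l\<close> unfolding child_label_def by simp
      then show ?thesis using bij_betw_imp_inj_on[OF bij_betw_card_tail[OF finite_free_slots]] F
        by (meson inj_onD)
    qed
  qed
  ultimately show "p = p' \<and> l = l'" by simp
qed

lemma sucN_diagonal:
  "sucN x x k = {(a, x + 1, c) | a c. 2 \<le> a \<and> a \<le> x + 1 \<and> 1 \<le> c \<and> c \<le> int k}"
  by (induction k) force+

lemma suc_label_bt_label:
  assumes "signed_perm ws"
  defines "K \<equiv> int (inc_prefix_len ws)" and "Y \<equiv> int (card (free_slots ws))"
    and "z \<equiv> int (length ws) - max_pos ws"
  shows "suc_label (bt_label ws) =
    {(a, Y + 1, z + 1) | a. 2 \<le> a \<and> a \<le> K + 2}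
    \<union> {(K + 1, b, z + 1) | b. K + 2 \<le> b \<and> b \<le> Y}
    \<union> {(a, K + 2, c) | a c. 2 \<le> a \<and> a \<le> K + 2 \<and> 1 \<le> c \<and> c \<le> z}"
proof -
  have "0 \<le> z" using max_pos_le_length[OF assms(1)] unfolding z_def by simp
  then have "suc_label (bt_label ws) = sucN (K + 1) Y (Suc (nat z))"
    unfolding suc_label_def bt_label_def K_def Y_def z_def by (simp add: Suc_nat_eq_nat_zadd1 add.commute add_diff_eq)
  also have "\<dots> = {(a, Y + 1, z + 1) | a. 2 \<le> a \<and> a \<le> K + 2}
    \<union> {(K + 1, b, z + 1) | b. K + 2 \<le> b \<and> b \<le> Y}
    \<union> {(a, K + 2, c) | a c. 2 \<le> a \<and> a \<le> K + 2 \<and> 1 \<le> c \<and> c \<le> z}"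
    using \<open>0 \<le> z\<close> unfolding sucN.simps sucN_diagonal by (simp add: add.assoc add.commute)
  finally show ?thesis .
qed

lemma mem_suc_label_bt_label:
  assumes "signed_perm ws"
  defines "K \<equiv> int (inc_prefix_len ws)" and "Y \<equiv> int (card (free_slots ws))"
    and "z \<equiv> int (length ws) - max_pos ws"
  shows "t \<in> suc_label (bt_label ws) \<longleftrightarrow>
    (\<exists>a. t = (a, Y + 1, z + 1) \<and> 2 \<le> a \<and> a \<le> K + 2) \<or>
    (\<exists>b. t = (K + 1, b, z + 1) \<and> K + 2 \<le> b \<and> b \<le> Y) \<or>
    (\<exists>a c. t = (a, K + 2, c) \<and> 2 \<le> a \<and> a \<le> K + 2 \<and> 1 \<le> c \<and> c \<le> z)"
  unfolding suc_label_bt_label[OF assms(1)] K_def Y_def z_def by (simp only: Un_iff mem_Collect_eq disj_assoc)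

lemma child_label_mem_suc_label:
  assumes "signed_perm ws" "(p, l) \<in> valid_insertions ws"
  shows "child_label ws p l \<in> suc_label (bt_label ws)"
proof -
  let ?K = "inc_prefix_len ws" and ?F = "free_slots ws"
  have pl: "p \<le> length ws" "max_pos ws < l" "l \<le> int (length ws) + 1"
    and cond: "if l = max_pos ws + 1 then p \<in> ?F else p \<le> ?K"
    using assms(2) unfolding valid_insertions_def by auto
  note mem = mem_suc_label_bt_label[OF assms(1)]
  consider "l = max_pos ws + 1" "p \<le> ?K" | "l = max_pos ws + 1" "?K < p" | "l \<noteq> max_pos ws + 1"
    by linarith
  then show ?thesis
  proof cases
    case 1
    then show ?thesis unfolding mem child_label_def by (intro disjI1 exI[of _ "int p + 2"]) simp
  next
    case 2
    then have "p \<in> {q \<in> ?F. p \<le> q}" using cond by simp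
    then have "0 < card {q \<in> ?F. p \<le> q}" using finite_free_slots[of ws] by (auto simp: card_gt_0_iff)
    then show ?thesis using 2 card_free_slots_tail_bound[of ws p] unfolding mem child_label_def
      by (intro disjI2 disjI1 exI[of _ "int ?K + 1 + int (card {q \<in> ?F. p \<le> q})"]) simp
  next
    case 3
    then show ?thesis using cond pl unfolding mem child_label_def
      by (intro disjI2 exI[of _ "int p + 2"] exI[of _ "int (length ws) + 2 - l"]) simp
  qed
qed

lemma suc_label_subset_child_labels:
  assumes "signed_perm ws" "t \<in> suc_label (bt_label ws)"
  shows "t \<in> (\<lambda>(p, l). child_label ws p l) ` valid_insertions ws"
proof -
  let ?K = "inc_prefix_len ws" and ?F = "free_slots ws" and ?m = "max_pos ws" and ?n = "length ws"
  have K_le: "?K \<le> ?n" by (rule inc_prefix_len_le_length)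
  have m: "0 \<le> ?m" "?m \<le> int ?n" using max_pos_nonneg max_pos_le_length[OF assms(1)] by auto
  have low: "(p, ?m + 1) \<in> valid_insertions ws" if "p \<le> ?K" for p
    using that K_le m free_slot_if_le_inc_prefix_len[OF that] unfolding valid_insertions_def by simp
  consider a where "t = (a, int (card ?F) + 1, int ?n - ?m + 1)" "2 \<le> a" "a \<le> int ?K + 2"
    | b where "t = (int ?K + 1, b, int ?n - ?m + 1)" "int ?K + 2 \<le> b" "b \<le> int (card ?F)"
    | a c where "t = (a, int ?K + 2, c)" "2 \<le> a" "a \<le> int ?K + 2" "1 \<le> c" "c \<le> int ?n - ?m"
    using assms(2) unfolding mem_suc_label_bt_label[OF assms(1)] by (elim disjE exE conjE) blast+
  then show ?thesis
  proof cases
    case (1 a)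
    then obtain p where p: "a = 2 + int p" using zle_iff_zadd by blast
    then have "p \<le> ?K" "t = child_label ws p (?m + 1)" using 1 unfolding child_label_def by simp_all
    then show ?thesis using low by (intro image_eqI[where x = "(p, ?m + 1)"]) simp_all
  next
    case (2 b)
    then obtain n where n: "b = int ?K + 2 + int n" using zle_iff_zadd by blast
    then have "Suc n \<in> {1..card ?F}" using 2(3) by simp
    then have "Suc n \<in> (\<lambda>p. card {q \<in> ?F. p \<le> q}) ` ?F"
      using bij_betw_card_tail[OF finite_free_slots, of ws] by (simp add: bij_betw_def)
    then obtain p where p: "p \<in> ?F" "card {q \<in> ?F. p \<le> q} = Suc n" by auto
    have "?K < p"
    proof (rule ccontr)
      assume "\<not> ?K < p"
      then show False using card_free_slots_from[of p ws] p n 2(3) by simp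
    qed
    then have "(p, ?m + 1) \<in> valid_insertions ws"
      using p(1) m unfolding valid_insertions_def free_slots_def by simp
    moreover have "t = child_label ws p (?m + 1)"
      using p(2) n 2(1) \<open>?K < p\<close> unfolding child_label_def by simp
    ultimately show ?thesis by (intro image_eqI[where x = "(p, ?m + 1)"]) simp_all
  next
    case (3 a c)
    then obtain p where p: "a = 2 + int p" using zle_iff_zadd by blast
    then have "(p, int ?n + 2 - c) \<in> valid_insertions ws" "t = child_label ws p (int ?n + 2 - c)"
      using K_le 3 unfolding valid_insertions_def child_label_def by simp_all
    then show ?thesis by (intro image_eqI[where x = "(p, int ?n + 2 - c)"]) simp_all
  qed
qed

lemma bt_invariant_child:
  assumes "bt_invariant ws" "c \<in> bt_children ws"
  shows "bt_invariant c"
proof -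
  obtain p l where "(p, l) \<in> valid_insertions ws" "c = insert_shift p l ws"
    using assms(2) unfolding bt_children_eq[OF assms(1)] by auto
  then show ?thesis using bt_invariant_insert_shift[OF assms(1)] by simp
qed

lemma bt_label_children:
  assumes "bt_invariant ws"
  shows "inj_on bt_label (bt_children ws)" "bt_label ` bt_children ws = suc_label (bt_label ws)"
proof -
  let ?f = "\<lambda>(p, l). insert_shift p l ws" and ?g = "\<lambda>(p, l). child_label ws p l"
  have perm: "signed_perm ws" using assms unfolding bt_invariant_def by simp
  have label: "(bt_label \<circ> ?f) u = ?g u" if "u \<in> valid_insertions ws" for u
    using bt_label_insert_shift[OF assms] that by (cases u) simp
  have "inj_on (bt_label \<circ> ?f) (valid_insertions ws)"
    using inj_on_child_label[of ws] label unfolding inj_on_def by metis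
  then show "inj_on bt_label (bt_children ws)"
    unfolding bt_children_eq[OF assms] by (rule inj_on_imageI)
  have "?g ` valid_insertions ws \<subseteq> suc_label (bt_label ws)"
    using child_label_mem_suc_label[OF perm] by auto
  moreover have "suc_label (bt_label ws) \<subseteq> ?g ` valid_insertions ws"
    using suc_label_subset_child_labels[OF perm] by blast
  moreover have "bt_label ` bt_children ws = ?g ` valid_insertions ws"
    unfolding bt_children_eq[OF assms] image_comp by (rule image_cong[OF refl label])
  ultimately show "bt_label ` bt_children ws = suc_label (bt_label ws)" by blast
qed

lemma length_bt_root [simp]: "length (bt_root j) = j"
  unfolding bt_root_def by simp

lemma nth_bt_root: "t < j \<Longrightarrow> bt_root j ! t = int t - int j"
  unfolding bt_root_def by (simp add: nth_upto)

lemma increasing_prefix_bt_root: "increasing_prefix (bt_root j) q \<or> j < q"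
  unfolding increasing_prefix_def using nth_bt_root[of _ j] by auto

lemma max_pos_bt_root: "max_pos (bt_root j) = 0"
  unfolding max_pos_def by (rule Max_eqI) (auto simp: in_set_conv_nth nth_bt_root)

lemma bt_invariant_bt_root: "bt_invariant (bt_root j)"
proof -
  let ?w = "bt_root j"
  have "signed_perm ?w"
    by (rule signed_permI) (auto simp: distinct_conv_nth in_set_conv_nth nth_bt_root)
  moreover have "full_nth ?w a < full_nth ?w b" if "a < b" "b < 2 * j" for a b
    using that nth_bt_root[of a j] nth_bt_root[of b j] nth_bt_root[of "2 * j - 1 - a" j]
      nth_bt_root[of "2 * j - 1 - b" j]
    unfolding full_nth_def by auto
  then have "avoids_2143 ?w"
    unfolding avoids_2143_iff_no_pattern pattern_2143_def by (auto dest: order.asym)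
  moreover have "increasing_below ?w (max_pos ?w)"
    using increasing_prefix_bt_root[of j] unfolding increasing_below_def increasing_prefix_def by auto
  ultimately show ?thesis unfolding bt_invariant_def by simp
qed

lemma bt_label_bt_root: "bt_label (bt_root j) = (int j + 1, int j + 1, int j + 1)"
proof -
  have "inc_prefix_len (bt_root j) = j"
    unfolding inc_prefix_len_def length_bt_root
    by (rule Max_Collect_eq_threshold) (use increasing_prefix_bt_root[of j] not_le in blast)+
  moreover have "free_slots (bt_root j) = {..j}"
    unfolding free_slots_def blocked_slot_def using increasing_prefix_bt_root[of j]
    unfolding increasing_prefix_def by fastforce
  ultimately show ?thesis unfolding bt_label_def max_pos_bt_root by simp
qed

theorem proposition2p6:
  fixes j :: nat
  shows "rooted_tree_iso (int j + 1, int j + 1, int j + 1) suc_label (bt_root j) bt_children"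
proof -
  interpret tree_labelling "(int j + 1, int j + 1, int j + 1)" suc_label "bt_root j" bt_children
      bt_label bt_invariant
    by unfold_locales
      (use bt_invariant_bt_root bt_label_bt_root bt_invariant_child bt_label_children in auto)
  show ?thesis by (rule rooted_tree_iso)
qed

end
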